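(* Let $S$ be a reduced affine monoid. Then $c(S)$ is the minimal non-negative integer $d$ such that the kernel of $\pi_R:R[x_a\mid a\in\mathcal{A}(S)]\to R[S]$ is generated as an ideal by binomials of degree at most $d$, for some commutative ring $R$ (with identity); moreover, for a given $d$ this condition holds for some commutative ring $R$ if and only if it holds for every commutative ring $R$.
   Context: A monoid is a commutative cancellative semigroup with identity, written multiplicatively; it is affine if it is a finitely generated submonoid of a finitely generated free abelian group, and reduced if the identity is its only invertible element. $\mathcal{A}(S)$ is the finite set of atoms of $S$; for $\alpha\in\mathbb{N}_0^{\mathcal{A}(S)}$ set $|\alpha|=\sum_a\alpha(a)$, $a^{\alpha}=\prod_a a^{\alpha(a)}$. The catenary degree $c(S)$: for $\alpha,\gamma\in\mathbb{N}_0^{\mathcal{A}(S)}$ let $\gcd(\alpha,\gamma)(a)=\min\{\alpha(a),\gamma(a)\}$ and $d(\alpha,\gamma)=\max\{|\alpha-\gcd(\alpha,\gamma)|,|\gamma-\gcd(\alpha,\gamma)|\}$; $c(S)$ is the minimal non-negative integer $d$ such that whenever $a^{\alpha}=a^{\gamma}$ there is a sequence $\alpha=\alpha^{(0)},\dots,\alpha^{(k)}=\gamma$ with $a^{\alpha^{(j)}}=a^{\alpha^{(j+1)}}$ and $d(\alpha^{(j)},\alpha^{(j+1)})\le d$ for all $j$. For a commutative ring $R$, $R[x_a\mid a\in\mathcal{A}(S)]$ is the polynomial ring with the standard grading ($\deg x_a=1$), $R[S]$ is the semigroup ring, and $\pi_R$ is the $R$-algebra homomorphism with $x^{\alpha}=\prod_a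 x_a^{\alpha(a)}\mapsto a^{\alpha}$. A binomial is an element $x^{\alpha}-x^{\gamma}$. *)

theory Defs
  imports "HOL-Library.Poly_Mapping"
begin

(* An affine monoid is modelled (up to isomorphism) as a finitely generated
   submonoid S of the free abelian group Z^n = ('n::finite => int), written additively. *)

inductive_set monoid_gen :: "('n \<Rightarrow> int) set \<Rightarrow> ('n \<Rightarrow> int) set" for G where
  zero: "(\<lambda>_. 0) \<in> monoid_gen G"
| add: "g \<in> G \<Longrightarrow> x \<in> monoid_gen G \<Longrightarrow> (\<lambda>i. g i + x i) \<in> monoid_gen G"

definition affine_monoid :: "('n::finite \<Rightarrow> int) set \<Rightarrow> bool" where
  "affine_monoid S \<longleftrightarrow> (\<exists>G. finite G \<and> S = monoid_gen G)"

definition monoid_units :: "('n \<Rightarrow> int) set \<Rightarrow> ('n \<Rightarrow> int) set" where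
  "monoid_units S = {x \<in> S. \<exists>y \<in> S. (\<lambda>i. x i + y i) = (\<lambda>_. 0)}"

definition reduced_monoid :: "('n \<Rightarrow> int) set \<Rightarrow> bool" where
  "reduced_monoid S \<longleftrightarrow> (\<forall>x \<in> monoid_units S. x = (\<lambda>_. 0))"

definition atoms :: "('n \<Rightarrow> int) set \<Rightarrow> ('n \<Rightarrow> int) set" where
  "atoms S = {a \<in> S. a \<notin> monoid_units S \<and>
     (\<forall>b \<in> S. \<forall>c \<in> S. a = (\<lambda>i. b i + c i) \<longrightarrow> b \<in> monoid_units S \<or> c \<in> monoid_units S)}"

definition factorizations :: "('n \<Rightarrow> int) set \<Rightarrow> (('n \<Rightarrow> int) \<Rightarrow>\<^sub>0 nat) set" where
  "factorizations S = {\<alpha>. Poly_Mapping.keys \<alpha> \<subseteq> atoms S}"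

definition fact_eval :: "(('n \<Rightarrow> int) \<Rightarrow>\<^sub>0 nat) \<Rightarrow> ('n \<Rightarrow> int)" where
  "fact_eval \<alpha> = (\<lambda>i. \<Sum>a \<in> Poly_Mapping.keys \<alpha>. int (Poly_Mapping.lookup \<alpha> a) * a i)"

definition flen :: "('v \<Rightarrow>\<^sub>0 nat) \<Rightarrow> nat" where
  "flen \<alpha> = (\<Sum>a \<in> Poly_Mapping.keys \<alpha>. Poly_Mapping.lookup \<alpha> a)"

(* gcd(alpha,gamma)(a) = min(alpha a, gamma a); note min x y = x - (x - y) on nat
   and subtraction on ('v =>0 nat) is pointwise *)
definition fgcd :: "('v \<Rightarrow>\<^sub>0 nat) \<Rightarrow> ('v \<Rightarrow>\<^sub>0 nat) \<Rightarrow> ('v \<Rightarrow>\<^sub>0 nat)" where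
  "fgcd \<alpha> \<gamma> = \<alpha> - (\<alpha> - \<gamma>)"

definition fdist :: "('v \<Rightarrow>\<^sub>0 nat) \<Rightarrow> ('v \<Rightarrow>\<^sub>0 nat) \<Rightarrow> nat" where
  "fdist \<alpha> \<gamma> = max (flen (\<alpha> - fgcd \<alpha> \<gamma>)) (flen (\<gamma> - fgcd \<alpha> \<gamma>))"

definition catenary_ok :: "('n \<Rightarrow> int) set \<Rightarrow> nat \<Rightarrow> bool" where
  "catenary_ok S d \<longleftrightarrow>
     (\<forall>\<alpha> \<in> factorizations S. \<forall>\<gamma> \<in> factorizations S. fact_eval \<alpha> = fact_eval \<gamma> \<longrightarrow>
        (\<exists>xs. xs \<noteq> [] \<and> hd xs = \<alpha> \<and> last xs = \<gamma> \<and> set xs \<subseteq> factorizations S \<and>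
           (\<forall>j < length xs - 1. fact_eval (xs ! j) = fact_eval (xs ! (j + 1)) \<and>
                                fdist (xs ! j) (xs ! (j + 1)) \<le> d)))"

definition catenary_degree :: "('n \<Rightarrow> int) set \<Rightarrow> nat" where
  "catenary_degree S = (LEAST d. catenary_ok S d)"

(* R[x_a | a in A(S)]: polynomials whose monomials x^alpha only involve atoms *)
definition poly_ring :: "('n \<Rightarrow> int) set \<Rightarrow> ((('n \<Rightarrow> int) \<Rightarrow>\<^sub>0 nat) \<Rightarrow>\<^sub>0 'r::comm_ring_1) set" where
  "poly_ring S = {f. Poly_Mapping.keys f \<subseteq> factorizations S}"

(* pi_R: R-linear, x^alpha |-> a^alpha, into R[S] represented as finitely supported
   maps ('n => int) =>0 R (supported on S) *)
definition pi_R :: "((('n \<Rightarrow> int) \<Rightarrow>\<^sub>0 nat) \<Rightarrow>\<^sub>0 'r::comm_ring_1) \<Rightarrow> (('n \<Rightarrow> int) \<Rightarrow>\<^sub>0 'r)" where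
  "pi_R f = (\<Sum>\<alpha> \<in> Poly_Mapping.keys f. Poly_Mapping.single (fact_eval \<alpha>) (Poly_Mapping.lookup f \<alpha>))"

definition pi_kernel :: "('n \<Rightarrow> int) set \<Rightarrow> ((('n \<Rightarrow> int) \<Rightarrow>\<^sub>0 nat) \<Rightarrow>\<^sub>0 'r::comm_ring_1) set" where
  "pi_kernel S = {f \<in> poly_ring S. pi_R f = 0}"

definition binomials_le :: "('n \<Rightarrow> int) set \<Rightarrow> nat \<Rightarrow> ((('n \<Rightarrow> int) \<Rightarrow>\<^sub>0 nat) \<Rightarrow>\<^sub>0 'r::comm_ring_1) set" where
  "binomials_le S d = {Poly_Mapping.single \<alpha> 1 - Poly_Mapping.single \<gamma> 1 | \<alpha> \<gamma>.
      \<alpha> \<in> factorizations S \<and> \<gamma> \<in> factorizations S \<and> flen \<alpha> \<le> d \<and> flen \<gamma> \<le> d}"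

inductive_set ideal_gen :: "'a::comm_ring_1 set \<Rightarrow> 'a set \<Rightarrow> 'a set" for P B where
  zero: "0 \<in> ideal_gen P B"
| step: "g \<in> P \<Longrightarrow> b \<in> B \<Longrightarrow> h \<in> ideal_gen P B \<Longrightarrow> g * b + h \<in> ideal_gen P B"

definition kernel_binom_gen :: "'r::comm_ring_1 itself \<Rightarrow> ('n \<Rightarrow> int) set \<Rightarrow> nat \<Rightarrow> bool" where
  "kernel_binom_gen R S d \<longleftrightarrow>
     (\<exists>B :: ((('n \<Rightarrow> int) \<Rightarrow>\<^sub>0 nat) \<Rightarrow>\<^sub>0 'r) set.
        B \<subseteq> binomials_le S d \<and> (pi_kernel S :: ((('n \<Rightarrow> int) \<Rightarrow>\<^sub>0 nat) \<Rightarrow>\<^sub>0 'r) set) = ideal_gen (poly_ring S) B)"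

end

theory Submission
  imports Defs
begin

(* A d-step between factorizations alpha, beta of the same element factors as
   x^alpha - x^beta = x^g (x^alpha' - x^beta'), with g = gcd(alpha, beta) and x^alpha' - x^beta' a
   kernel binomial of degree at most d. So if any two factorizations of an element are joined by a
   chain of d-steps, every x^alpha - x^gamma in the kernel, and then (by induction on the number of
   terms) the whole kernel, lies in the ideal of these binomials. Conversely, if binomials of degree
   at most d generate the kernel, pushing coefficients forward along the indicator of the d-chain
   class of alpha is additive and kills every multiple of a generator, hence the kernel; applied to
   x^alpha - x^gamma it puts gamma into the class. Both conditions are thus equivalent to
   c(S) <= d, whatever the ring. Finally c(S) is finite: the atoms of a reduced monoid lie among
   its generators, so by Dickson's lemma there are only finitely many componentwise minimal pairs
   of distinct factorizations of equal value, and every other such pair is a minimal one plus a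
   smaller pair, which yields chains by induction on size. *)

lemma keys_add_nat: "Poly_Mapping.keys ((\<alpha>::'v \<Rightarrow>\<^sub>0 nat) + \<beta>) = Poly_Mapping.keys \<alpha> \<union> Poly_Mapping.keys \<beta>"
  by (auto simp: in_keys_iff lookup_add)

lemma factorizations_add_iff:
  "\<alpha> + \<beta> \<in> factorizations S \<longleftrightarrow> \<alpha> \<in> factorizations S \<and> \<beta> \<in> factorizations S"
  by (simp add: factorizations_def keys_add_nat)

lemma factorizations_diff: "\<alpha> \<in> factorizations S \<Longrightarrow> \<alpha> - \<beta> \<in> factorizations S"
  by (auto simp: factorizations_def in_keys_iff lookup_minus)

lemma fact_eval_add: "fact_eval (\<alpha> + \<beta>) = (\<lambda>i. fact_eval \<alpha> i + fact_eval \<beta> i)"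
  unfolding fact_eval_def by (rule ext, rule setsum_keys_plus_distrib) (simp_all add: distrib_right)

lemma fact_eval_add_left_cancel:
  "fact_eval (\<beta> + \<alpha>) = fact_eval (\<beta> + \<gamma>) \<Longrightarrow> fact_eval \<alpha> = fact_eval \<gamma>"
  by (simp add: fact_eval_add fun_eq_iff)

lemma flen_add: "flen (\<alpha> + \<beta>) = flen \<alpha> + flen \<beta>"
  unfolding flen_def by (rule setsum_keys_plus_distrib) simp_all

lemma flen_eq_0_iff: "flen \<alpha> = 0 \<longleftrightarrow> \<alpha> = 0"
  by (auto simp: flen_def in_keys_iff simp flip: keys_eq_empty)

definition fle :: "('v \<Rightarrow>\<^sub>0 nat) \<Rightarrow> ('v \<Rightarrow>\<^sub>0 nat) \<Rightarrow> bool" where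
  "fle \<alpha> \<beta> \<longleftrightarrow> (\<forall>a. Poly_Mapping.lookup \<alpha> a \<le> Poly_Mapping.lookup \<beta> a)"

lemma fle_add_diff: "fle \<alpha> \<beta> \<Longrightarrow> \<alpha> + (\<beta> - \<alpha>) = \<beta>"
  by (simp add: fle_def poly_mapping_eq_iff fun_eq_iff lookup_add lookup_minus)

lemma fle_diff: "fle (\<alpha> - \<beta>) \<alpha>"
  by (simp add: fle_def lookup_minus)

lemma fle_if_le_on_keys:
  "Poly_Mapping.keys \<alpha> \<subseteq> A \<Longrightarrow> (\<And>a. a \<in> A \<Longrightarrow> Poly_Mapping.lookup \<alpha> a \<le> Poly_Mapping.lookup \<beta> a) \<Longrightarrow> fle \<alpha> \<beta>"
  unfolding fle_def by (metis in_keys_iff le0 subsetD)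

lemma fle_trans: "fle \<alpha> \<beta> \<Longrightarrow> fle \<beta> \<gamma> \<Longrightarrow> fle \<alpha> \<gamma>"
  unfolding fle_def using order_trans by blast

lemma flen_mono: "fle \<alpha> \<beta> \<Longrightarrow> flen \<alpha> \<le> flen \<beta>"
  by (metis fle_add_diff flen_add le_add1)

lemma fle_flen_antisym:
  assumes "fle \<alpha> \<beta>" and "flen \<beta> \<le> flen \<alpha>"
  shows "\<alpha> = \<beta>"
proof -
  have "flen (\<beta> - \<alpha>) = 0"
    using assms flen_add[of \<alpha> "\<beta> - \<alpha>"] by (simp add: fle_add_diff)
  then show ?thesis
    using fle_add_diff[OF assms(1)] by (simp add: flen_eq_0_iff)
qed

lemma lookup_fgcd:
  "Poly_Mapping.lookup (fgcd \<alpha> \<gamma>) a = min (Poly_Mapping.lookup \<alpha> a) (Poly_Mapping.lookup \<gamma> a)"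
  by (simp add: fgcd_def lookup_minus)

lemma fgcd_commute: "fgcd \<alpha> \<gamma> = fgcd \<gamma> \<alpha>"
  by (simp add: poly_mapping_eq_iff fun_eq_iff lookup_fgcd min.commute)

lemma fgcd_add_diff: "fgcd \<alpha> \<gamma> + (\<alpha> - fgcd \<alpha> \<gamma>) = \<alpha>"
  by (simp add: poly_mapping_eq_iff fun_eq_iff lookup_add lookup_minus lookup_fgcd)

lemma fgcd_add_left: "fgcd (\<beta> + \<alpha>) (\<beta> + \<gamma>) = \<beta> + fgcd \<alpha> \<gamma>"
  by (simp add: poly_mapping_eq_iff fun_eq_iff lookup_add lookup_fgcd min_def)

lemma fdist_commute: "fdist \<alpha> \<gamma> = fdist \<gamma> \<alpha>"
  by (simp add: fdist_def fgcd_commute max.commute)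

lemma fdist_add_left: "fdist (\<beta> + \<alpha>) (\<beta> + \<gamma>) = fdist \<alpha> \<gamma>"
proof -
  have "(\<beta> + \<alpha>) - (\<beta> + \<delta>) = \<alpha> - \<delta>" for \<alpha> \<delta> :: "'a \<Rightarrow>\<^sub>0 nat"
    by (simp add: poly_mapping_eq_iff fun_eq_iff lookup_add lookup_minus)
  then show ?thesis
    by (simp add: fdist_def fgcd_add_left)
qed

lemma fdist_le_max: "fdist \<alpha> \<gamma> \<le> max (flen \<alpha>) (flen \<gamma>)"
  using flen_mono[OF fle_diff, of \<alpha> "fgcd \<alpha> \<gamma>"] flen_mono[OF fle_diff, of \<gamma> "fgcd \<alpha> \<gamma>"]
  by (auto simp: fdist_def)


subsection \<open>Chains of factorizations\<close>

definition fact_step :: "('n \<Rightarrow> int) set \<Rightarrow> nat \<Rightarrow> (('n \<Rightarrow> int) \<Rightarrow>\<^sub>0 nat) \<Rightarrow> (('n \<Rightarrow> int) \<Rightarrow>\<^sub>0 nat) \<Rightarrow> bool" where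
  "fact_step S d \<alpha> \<gamma> \<longleftrightarrow> \<alpha> \<in> factorizations S \<and> \<gamma> \<in> factorizations S \<and>
     fact_eval \<alpha> = fact_eval \<gamma> \<and> fdist \<alpha> \<gamma> \<le> d"

lemma fact_step_commute: "fact_step S d \<alpha> \<gamma> \<longleftrightarrow> fact_step S d \<gamma> \<alpha>"
  by (auto simp: fact_step_def fdist_commute)

lemma fact_step_add_left:
  "fact_step S d \<alpha> \<gamma> \<Longrightarrow> \<beta> \<in> factorizations S \<Longrightarrow> fact_step S d (\<beta> + \<alpha>) (\<beta> + \<gamma>)"
  by (simp add: fact_step_def factorizations_add_iff fact_eval_add fdist_add_left)

lemma fact_chain_add_left:
  "(fact_step S d)\<^sup>*\<^sup>* \<alpha> \<gamma> \<Longrightarrow> \<beta> \<in> factorizations S \<Longrightarrow> (fact_step S d)\<^sup>*\<^sup>* (\<beta> + \<alpha>) (\<beta> + \<gamma>)"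
  by (induction rule: rtranclp_induct) (auto intro: rtranclp.rtrancl_into_rtrancl fact_step_add_left)

lemma fact_chain_factorizations:
  "(fact_step S d)\<^sup>*\<^sup>* \<alpha> \<gamma> \<Longrightarrow> \<alpha> \<in> factorizations S \<Longrightarrow> \<gamma> \<in> factorizations S"
  by (induction rule: rtranclp_induct) (auto simp: fact_step_def)

lemma fact_step_common_factor:
  assumes "fact_step S d \<alpha> \<gamma>"
  obtains g \<alpha>' \<gamma>' where "\<alpha> = g + \<alpha>'" "\<gamma> = g + \<gamma>'" "g \<in> factorizations S"
    "\<alpha>' \<in> factorizations S" "\<gamma>' \<in> factorizations S" "flen \<alpha>' \<le> d" "flen \<gamma>' \<le> d"
    "fact_eval \<alpha>' = fact_eval \<gamma>'"
proof
  let ?g = "fgcd \<alpha> \<gamma>"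
  show \<alpha>: "\<alpha> = ?g + (\<alpha> - ?g)" and \<gamma>: "\<gamma> = ?g + (\<gamma> - ?g)"
    using fgcd_add_diff[of \<alpha> \<gamma>] fgcd_add_diff[of \<gamma> \<alpha>] by (simp_all add: fgcd_commute)
  show "?g \<in> factorizations S" "\<alpha> - ?g \<in> factorizations S" "\<gamma> - ?g \<in> factorizations S"
    using assms by (simp_all add: fact_step_def fgcd_def factorizations_diff)
  show "flen (\<alpha> - ?g) \<le> d" "flen (\<gamma> - ?g) \<le> d"
    using assms by (simp_all add: fact_step_def fdist_def)
  show "fact_eval (\<alpha> - ?g) = fact_eval (\<gamma> - ?g)"
    using assms \<alpha> \<gamma> by (metis fact_step_def fact_eval_add_left_cancel)
qed

lemma fact_chain_iff_list:
  assumes "\<alpha> \<in> factorizations S"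
  shows "(fact_step S d)\<^sup>*\<^sup>* \<alpha> \<gamma> \<longleftrightarrow>
    (\<exists>xs. xs \<noteq> [] \<and> hd xs = \<alpha> \<and> last xs = \<gamma> \<and> set xs \<subseteq> factorizations S \<and>
       (\<forall>j < length xs - 1. fact_eval (xs ! j) = fact_eval (xs ! (j + 1)) \<and>
                            fdist (xs ! j) (xs ! (j + 1)) \<le> d))"
    (is "_ \<longleftrightarrow> (\<exists>xs. ?chain xs)")
proof
  assume "(fact_step S d)\<^sup>*\<^sup>* \<alpha> \<gamma>"
  then obtain n where "(fact_step S d ^^ n) \<alpha> \<gamma>"
    using rtranclp_imp_relpowp by metis
  then obtain f where f0: "f 0 = \<alpha>" and fn: "f n = \<gamma>"
    and steps: "\<And>i. i < n \<Longrightarrow> fact_step S d (f i) (f (Suc i))"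
    unfolding relpowp_fun_conv by blast
  let ?xs = "map f [0..<Suc n]"
  have "f i \<in> factorizations S" if "i \<le> n" for i
  proof (cases i)
    case 0
    then show ?thesis using assms f0 by simp
  next
    case (Suc j)
    then show ?thesis using that steps[of j] by (simp add: fact_step_def)
  qed
  then have "set ?xs \<subseteq> factorizations S"
    by (auto simp del: upt_Suc)
  moreover have "fact_eval (?xs ! j) = fact_eval (?xs ! (j + 1)) \<and>
      fdist (?xs ! j) (?xs ! (j + 1)) \<le> d" if "j < n" for j
    using that steps[of j] by (simp add: fact_step_def nth_map_upt del: upt_Suc)
  moreover have "hd ?xs = \<alpha>" "last ?xs = \<gamma>"
    using f0 fn by (simp add: hd_map del: upt_Suc, simp)
  ultimately have "?chain ?xs"
    by (simp del: upt_Suc)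
  then show "\<exists>xs. ?chain xs"
    by blast
next
  assume "\<exists>xs. ?chain xs"
  then obtain xs where xs: "?chain xs"
    by blast
  let ?n = "length xs - 1"
  have "fact_step S d (xs ! i) (xs ! Suc i)" if "i < ?n" for i
    using xs that nth_mem[of i xs] nth_mem[of "Suc i" xs] by (auto simp: fact_step_def)
  then have "(fact_step S d ^^ ?n) (xs ! 0) (xs ! ?n)"
    unfolding relpowp_fun_conv by blast
  moreover have "xs ! 0 = \<alpha>" "xs ! ?n = \<gamma>"
    using xs by (metis hd_conv_nth, metis last_conv_nth)
  ultimately show "(fact_step S d)\<^sup>*\<^sup>* \<alpha> \<gamma>"
    by (metis relpowp_imp_rtranclp)
qed

lemma catenary_ok_iff_fact_chain:
  "catenary_ok S d \<longleftrightarrow> (\<forall>\<alpha> \<in> factorizations S. \<forall>\<gamma> \<in> factorizations S.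
     fact_eval \<alpha> = fact_eval \<gamma> \<longrightarrow> (fact_step S d)\<^sup>*\<^sup>* \<alpha> \<gamma>)"
  by (simp add: catenary_ok_def fact_chain_iff_list)

subsection \<open>Pushforward of finitely supported maps and ideals\<close>

definition pushforward :: "('a \<Rightarrow> 'b) \<Rightarrow> ('a \<Rightarrow>\<^sub>0 'r::comm_monoid_add) \<Rightarrow> ('b \<Rightarrow>\<^sub>0 'r)" where
  "pushforward e f = (\<Sum>\<alpha> \<in> Poly_Mapping.keys f. Poly_Mapping.single (e \<alpha>) (Poly_Mapping.lookup f \<alpha>))"

lemma pi_R_eq_pushforward: "pi_R = pushforward fact_eval"
  by (simp add: fun_eq_iff pi_R_def pushforward_def)

lemma pushforward_add: "pushforward e (f + g) = pushforward e f + pushforward e g"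
  unfolding pushforward_def by (rule setsum_keys_plus_distrib) (simp_all add: single_add)

lemma pushforward_0 [simp]: "pushforward e 0 = 0"
  by (simp add: pushforward_def)

lemma pushforward_diff:
  "pushforward e (f - g) = pushforward e f - pushforward e (g :: _ \<Rightarrow>\<^sub>0 'r::ab_group_add)"
  using pushforward_add[of e "f - g" g] by (simp add: algebra_simps)

lemma pushforward_single [simp]: "pushforward e (Poly_Mapping.single \<alpha> c) = Poly_Mapping.single (e \<alpha>) c"
  by (simp add: pushforward_def)

lemma lookup_pushforward:
  "Poly_Mapping.lookup (pushforward e f) b = (\<Sum>\<alpha> \<in> {\<alpha> \<in> Poly_Mapping.keys f. e \<alpha> = b}. Poly_Mapping.lookup f \<alpha>)"
  by (simp add: pushforward_def lookup_sum lookup_single when_def sum.inter_filter)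

lemma pushforward_eq_0_imp_collision:
  assumes "pushforward e f = 0" and "\<alpha> \<in> Poly_Mapping.keys f"
  obtains \<beta> where "\<beta> \<in> Poly_Mapping.keys f" "\<beta> \<noteq> \<alpha>" "e \<beta> = e \<alpha>"
proof (rule ccontr)
  assume "\<not> thesis"
  with that assms(2) have "{\<beta> \<in> Poly_Mapping.keys f. e \<beta> = e \<alpha>} = {\<alpha>}"
    by blast
  then have "Poly_Mapping.lookup (pushforward e f) (e \<alpha>) = Poly_Mapping.lookup f \<alpha>"
    by (simp add: lookup_pushforward)
  with assms show False
    by (simp add: in_keys_iff)
qed

lemma pushforward_mult_single:
  fixes g :: "'a::comm_monoid_add \<Rightarrow>\<^sub>0 'r::comm_semiring_1"
  shows "pushforward e (g * Poly_Mapping.single \<alpha> 1) = pushforward (\<lambda>\<beta>. e (\<beta> + \<alpha>)) g"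
proof -
  have "g = (\<Sum>\<beta> \<in> Poly_Mapping.keys g. Poly_Mapping.single \<beta> (Poly_Mapping.lookup g \<beta>))"
    by (simp add: poly_mapping_eq_iff fun_eq_iff lookup_sum lookup_single when_def in_keys_iff)
  then have "g * Poly_Mapping.single \<alpha> 1 =
      (\<Sum>\<beta> \<in> Poly_Mapping.keys g. Poly_Mapping.single \<beta> (Poly_Mapping.lookup g \<beta>) * Poly_Mapping.single \<alpha> 1)"
    by (metis sum_distrib_right)
  also have "\<dots> = (\<Sum>\<beta> \<in> Poly_Mapping.keys g. Poly_Mapping.single (\<beta> + \<alpha>) (Poly_Mapping.lookup g \<beta>))"
    by (simp add: mult_single)
  finally show ?thesis
    by (simp add: pushforward_def[of "\<lambda>\<beta>. e (\<beta> + \<alpha>)"]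
        sum_comp_morphism[of "pushforward e", symmetric, OF pushforward_0 pushforward_add] o_def)
qed

lemma pushforward_ideal_gen_eq_0:
  fixes x :: "'a::comm_monoid_add \<Rightarrow>\<^sub>0 'r::comm_ring_1"
  assumes "x \<in> ideal_gen P B"
    and "\<And>b. b \<in> B \<Longrightarrow> \<exists>\<alpha> \<gamma>. b = Poly_Mapping.single \<alpha> 1 - Poly_Mapping.single \<gamma> 1 \<and>
                                (\<forall>\<beta>. e (\<beta> + \<alpha>) = e (\<beta> + \<gamma>))"
  shows "pushforward e x = 0"
  using assms(1)
proof (induction rule: ideal_gen.induct)
  case (step g b h)
  then obtain \<alpha> \<gamma> where "b = Poly_Mapping.single \<alpha> 1 - Poly_Mapping.single \<gamma> 1"
    and "\<forall>\<beta>. e (\<beta> + \<alpha>) = e (\<beta> + \<gamma>)"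
    using assms(2) by blast
  then show ?case
    using step.IH by (simp add: right_diff_distrib pushforward_add pushforward_diff pushforward_mult_single)
qed simp

lemma ideal_gen_add: "x \<in> ideal_gen P B \<Longrightarrow> y \<in> ideal_gen P B \<Longrightarrow> x + y \<in> ideal_gen P B"
  by (induction rule: ideal_gen.induct) (auto simp: add.assoc intro: ideal_gen.step)

lemma ideal_gen_base: "1 \<in> P \<Longrightarrow> b \<in> B \<Longrightarrow> b \<in> ideal_gen P B"
  using ideal_gen.step[OF _ _ ideal_gen.zero, of 1 P b B] by simp

lemma ideal_gen_subset:
  assumes "0 \<in> P" "B \<subseteq> P" "\<And>x y. x \<in> P \<Longrightarrow> y \<in> P \<Longrightarrow> x + y \<in> P" "\<And>x y. x \<in> P \<Longrightarrow> y \<in> P \<Longrightarrow> x * y \<in> P"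
  shows "ideal_gen P B \<subseteq> P"
proof
  show "x \<in> P" if "x \<in> ideal_gen P B" for x
    using that by (induction rule: ideal_gen.induct) (use assms in blast)+
qed

subsection \<open>The kernel of \<open>\<pi>\<^sub>R\<close> and the catenary degree\<close>

lemma poly_ring_add: "f \<in> poly_ring S \<Longrightarrow> g \<in> poly_ring S \<Longrightarrow> f + g \<in> poly_ring S"
  unfolding poly_ring_def using keys_add[of f g] by blast

lemma poly_ring_mult:
  assumes "f \<in> poly_ring S" and "g \<in> poly_ring S"
  shows "f * g \<in> poly_ring S"
proof -
  have "Poly_Mapping.keys (f * g) \<subseteq> {a + b |a b. a \<in> Poly_Mapping.keys f \<and> b \<in> Poly_Mapping.keys g}"
    by (rule keys_mult)
  also have "\<dots> \<subseteq> factorizations S"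
    using assms by (auto simp: poly_ring_def factorizations_add_iff)
  finally show ?thesis
    by (simp add: poly_ring_def)
qed

lemma poly_ring_diff: "f \<in> poly_ring S \<Longrightarrow> g \<in> poly_ring S \<Longrightarrow> f - g \<in> poly_ring S"
  unfolding poly_ring_def using keys_diff[of f g] by blast

lemma poly_ring_single: "\<alpha> \<in> factorizations S \<Longrightarrow> Poly_Mapping.single \<alpha> c \<in> poly_ring S"
  by (simp add: poly_ring_def)

lemma zero_in_poly_ring: "0 \<in> poly_ring S"
  by (simp add: poly_ring_def)

lemma one_in_poly_ring: "1 \<in> poly_ring S"
  by (simp add: poly_ring_def factorizations_def)

lemma single_one_eq_iff:
  "Poly_Mapping.single a (1::'r::zero_neq_one) = Poly_Mapping.single b 1 \<longleftrightarrow> a = b"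
  by (metis lookup_single_eq lookup_single_not_eq zero_neq_one)

definition kernel_binomials_le :: "('n \<Rightarrow> int) set \<Rightarrow> nat \<Rightarrow> ((('n \<Rightarrow> int) \<Rightarrow>\<^sub>0 nat) \<Rightarrow>\<^sub>0 'r::comm_ring_1) set" where
  "kernel_binomials_le S d = {Poly_Mapping.single \<alpha> 1 - Poly_Mapping.single \<gamma> 1 | \<alpha> \<gamma>.
      \<alpha> \<in> factorizations S \<and> \<gamma> \<in> factorizations S \<and> flen \<alpha> \<le> d \<and> flen \<gamma> \<le> d \<and>
      fact_eval \<alpha> = fact_eval \<gamma>}"

lemma ideal_gen_kernel_binomials_subset_kernel:
  fixes S :: "('n \<Rightarrow> int) set"
  shows "ideal_gen (poly_ring S) (kernel_binomials_le S d) \<subseteq> pi_kernel S"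
proof
  fix x :: "(('n \<Rightarrow> int) \<Rightarrow>\<^sub>0 nat) \<Rightarrow>\<^sub>0 'r::comm_ring_1"
  assume x: "x \<in> ideal_gen (poly_ring S) (kernel_binomials_le S d)"
  have "kernel_binomials_le S d \<subseteq> (poly_ring S :: ((('n \<Rightarrow> int) \<Rightarrow>\<^sub>0 nat) \<Rightarrow>\<^sub>0 'r) set)"
    by (auto simp: kernel_binomials_le_def intro: poly_ring_diff poly_ring_single)
  then have "ideal_gen (poly_ring S) (kernel_binomials_le S d) \<subseteq> (poly_ring S :: ((('n \<Rightarrow> int) \<Rightarrow>\<^sub>0 nat) \<Rightarrow>\<^sub>0 'r) set)"
    by (rule ideal_gen_subset[OF zero_in_poly_ring _ poly_ring_add poly_ring_mult])
  then have "x \<in> poly_ring S"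
    using x by blast
  moreover have "pi_R x = 0"
    unfolding pi_R_eq_pushforward
    by (rule pushforward_ideal_gen_eq_0[OF x]) (fastforce simp: kernel_binomials_le_def fact_eval_add)
  ultimately show "x \<in> pi_kernel S"
    by (simp add: pi_kernel_def)
qed

lemma fact_chain_binomial_in_ideal_gen:
  assumes "(fact_step S d)\<^sup>*\<^sup>* \<alpha> \<gamma>"
  shows "Poly_Mapping.single \<alpha> c - Poly_Mapping.single \<gamma> c \<in> ideal_gen (poly_ring S) (kernel_binomials_le S d)"
  using assms
proof (induction rule: converse_rtranclp_induct)
  case base
  then show ?case by (simp add: ideal_gen.zero)
next
  case (step \<alpha> \<beta>)
  obtain g \<alpha>' \<beta>' where \<alpha>: "\<alpha> = g + \<alpha>'" and \<beta>: "\<beta> = g + \<beta>'" and g: "g \<in> factorizations S"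
    and "\<alpha>' \<in> factorizations S" "\<beta>' \<in> factorizations S" "flen \<alpha>' \<le> d" "flen \<beta>' \<le> d"
    and "fact_eval \<alpha>' = fact_eval \<beta>'"
    using step.hyps(1) by (rule fact_step_common_factor)
  then have binomial: "Poly_Mapping.single \<alpha>' 1 - Poly_Mapping.single \<beta>' 1 \<in> kernel_binomials_le S d"
    by (auto simp: kernel_binomials_le_def)
  have eq: "Poly_Mapping.single \<alpha> c - Poly_Mapping.single \<gamma> c =
      Poly_Mapping.single g c * (Poly_Mapping.single \<alpha>' 1 - Poly_Mapping.single \<beta>' 1) +
      (Poly_Mapping.single \<beta> c - Poly_Mapping.single \<gamma> c)"
    by (simp add: \<alpha> \<beta> right_diff_distrib mult_single)
  show ?case
    unfolding eq by (rule ideal_gen.step[OF poly_ring_single[OF g] binomial step.IH])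
qed

lemma kernel_remove_term:
  fixes S :: "('n \<Rightarrow> int) set" and f :: "(('n \<Rightarrow> int) \<Rightarrow>\<^sub>0 nat) \<Rightarrow>\<^sub>0 'r::comm_ring_1"
  assumes "catenary_ok S d" and "f \<in> pi_kernel S" and "\<alpha> \<in> Poly_Mapping.keys f"
  obtains t where "t \<in> ideal_gen (poly_ring S) (kernel_binomials_le S d)" "f - t \<in> pi_kernel S"
    "Poly_Mapping.keys (f - t) \<subseteq> Poly_Mapping.keys f - {\<alpha>}"
proof -
  have f: "Poly_Mapping.keys f \<subseteq> factorizations S" "pushforward fact_eval f = 0"
    using assms(2) by (simp_all add: pi_kernel_def poly_ring_def pi_R_eq_pushforward)
  obtain \<beta> where \<beta>: "\<beta> \<in> Poly_Mapping.keys f" "\<beta> \<noteq> \<alpha>" "fact_eval \<beta> = fact_eval \<alpha>"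
    using pushforward_eq_0_imp_collision[OF f(2) assms(3)] .
  define c where "c = Poly_Mapping.lookup f \<alpha>"
  define t where "t = Poly_Mapping.single \<alpha> c - Poly_Mapping.single \<beta> c"
  have "\<alpha> \<in> factorizations S" "\<beta> \<in> factorizations S"
    using assms(3) \<beta>(1) f(1) by blast+
  then have "(fact_step S d)\<^sup>*\<^sup>* \<alpha> \<beta>"
    using assms(1) \<beta>(3) by (simp add: catenary_ok_iff_fact_chain)
  then have "t \<in> ideal_gen (poly_ring S) (kernel_binomials_le S d)"
    unfolding t_def by (rule fact_chain_binomial_in_ideal_gen)
  moreover have keys: "Poly_Mapping.keys (f - t) \<subseteq> Poly_Mapping.keys f - {\<alpha>}"
    using assms(3) \<beta>
    by (auto simp: t_def c_def in_keys_iff lookup_minus lookup_single when_def split: if_splits)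
  moreover have "pushforward fact_eval (f - t) = 0"
    using f(2) \<beta>(3) by (simp add: pushforward_diff t_def)
  then have "f - t \<in> pi_kernel S"
    using keys f(1) by (auto simp: pi_kernel_def poly_ring_def pi_R_eq_pushforward)
  ultimately show thesis
    using that by blast
qed

lemma kernel_subset_ideal_gen_kernel_binomials:
  fixes S :: "('n \<Rightarrow> int) set"
  assumes "catenary_ok S d"
  shows "pi_kernel S \<subseteq> ideal_gen (poly_ring S) (kernel_binomials_le S d)"
proof
  fix f :: "(('n \<Rightarrow> int) \<Rightarrow>\<^sub>0 nat) \<Rightarrow>\<^sub>0 'r::comm_ring_1"
  assume "f \<in> pi_kernel S"
  then show "f \<in> ideal_gen (poly_ring S) (kernel_binomials_le S d)"
  proof (induction "card (Poly_Mapping.keys f)" arbitrary: f rule: less_induct)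
    case less
    show ?case
    proof (cases "f = 0")
      case True
      then show ?thesis by (simp add: ideal_gen.zero)
    next
      case False
      then obtain \<alpha> where \<alpha>: "\<alpha> \<in> Poly_Mapping.keys f"
        by (metis equals0I keys_eq_empty)
      with assms less.prems obtain t where t: "t \<in> ideal_gen (poly_ring S) (kernel_binomials_le S d)"
        and kernel: "f - t \<in> pi_kernel S" and keys: "Poly_Mapping.keys (f - t) \<subseteq> Poly_Mapping.keys f - {\<alpha>}"
        by (rule kernel_remove_term)
      have "card (Poly_Mapping.keys (f - t)) < card (Poly_Mapping.keys f)"
        using keys \<alpha> by (intro psubset_card_mono) auto
      then have "f - t \<in> ideal_gen (poly_ring S) (kernel_binomials_le S d)"
        using kernel by (rule less.hyps)
      from ideal_gen_add[OF this t] show ?thesis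
        by simp
    qed
  qed
qed

lemma catenary_ok_imp_kernel_binom_gen:
  fixes S :: "('n \<Rightarrow> int) set"
  assumes "catenary_ok S d"
  shows "kernel_binom_gen TYPE('r::comm_ring_1) S d"
proof -
  have "kernel_binomials_le S d \<subseteq> (binomials_le S d :: ((('n \<Rightarrow> int) \<Rightarrow>\<^sub>0 nat) \<Rightarrow>\<^sub>0 'r) set)"
    by (auto simp: kernel_binomials_le_def binomials_le_def)
  moreover have "pi_kernel S = (ideal_gen (poly_ring S) (kernel_binomials_le S d) :: ((('n \<Rightarrow> int) \<Rightarrow>\<^sub>0 nat) \<Rightarrow>\<^sub>0 'r) set)"
    using kernel_subset_ideal_gen_kernel_binomials[OF assms] ideal_gen_kernel_binomials_subset_kernel
    by (rule subset_antisym)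
  ultimately show ?thesis
    unfolding kernel_binom_gen_def by blast
qed

lemma kernel_generator_fact_step:
  fixes B :: "((('n \<Rightarrow> int) \<Rightarrow>\<^sub>0 nat) \<Rightarrow>\<^sub>0 'r::comm_ring_1) set"
  assumes "B \<subseteq> binomials_le S d" and "pi_kernel S = ideal_gen (poly_ring S) B" and "b \<in> B"
  obtains \<alpha> \<gamma> where "b = Poly_Mapping.single \<alpha> 1 - Poly_Mapping.single \<gamma> 1" "fact_step S d \<alpha> \<gamma>"
proof -
  obtain \<alpha> \<gamma> where b: "b = Poly_Mapping.single \<alpha> 1 - Poly_Mapping.single \<gamma> 1"
    and factorizations: "\<alpha> \<in> factorizations S" "\<gamma> \<in> factorizations S"
    and len: "flen \<alpha> \<le> d" "flen \<gamma> \<le> d"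
    using assms(1,3) by (auto simp: binomials_le_def)
  have "b \<in> pi_kernel S"
    using assms(2) ideal_gen_base[OF one_in_poly_ring assms(3)] by simp
  then have "Poly_Mapping.single (fact_eval \<alpha>) (1::'r) = Poly_Mapping.single (fact_eval \<gamma>) 1"
    by (simp add: pi_kernel_def pi_R_eq_pushforward pushforward_diff b)
  then have "fact_step S d \<alpha> \<gamma>"
    using factorizations len fdist_le_max[of \<alpha> \<gamma>] by (simp add: fact_step_def single_one_eq_iff)
  with b show thesis
    by (rule that)
qed

lemma fact_chain_add_step_iff:
  assumes "fact_step S d \<alpha>' \<gamma>'" and "\<alpha> \<in> factorizations S"
  shows "(fact_step S d)\<^sup>*\<^sup>* \<alpha> (\<beta> + \<alpha>') \<longleftrightarrow> (fact_step S d)\<^sup>*\<^sup>* \<alpha> (\<beta> + \<gamma>')"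
proof -
  have "(fact_step S d)\<^sup>*\<^sup>* \<alpha> (\<beta> + \<delta>')"
    if "(fact_step S d)\<^sup>*\<^sup>* \<alpha> (\<beta> + \<delta>)" "fact_step S d \<delta> \<delta>'" for \<delta> \<delta>'
  proof -
    have "\<beta> \<in> factorizations S"
      using fact_chain_factorizations[OF that(1) assms(2)] by (simp add: factorizations_add_iff)
    with that show ?thesis
      by (meson fact_step_add_left rtranclp.rtrancl_into_rtrancl)
  qed
  then show ?thesis
    using assms(1) fact_step_commute by metis
qed

lemma kernel_binom_gen_imp_catenary_ok:
  fixes S :: "('n \<Rightarrow> int) set"
  assumes "kernel_binom_gen TYPE('r::comm_ring_1) S d"
  shows "catenary_ok S d"
  unfolding catenary_ok_iff_fact_chain
proof (intro ballI impI)
  fix \<alpha> \<gamma> assume \<alpha>: "\<alpha> \<in> factorizations S" and \<gamma>: "\<gamma> \<in> factorizations S"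
    and eq: "fact_eval \<alpha> = fact_eval \<gamma>"
  obtain B :: "((('n \<Rightarrow> int) \<Rightarrow>\<^sub>0 nat) \<Rightarrow>\<^sub>0 'r) set"
    where B: "B \<subseteq> binomials_le S d" and kernel: "pi_kernel S = ideal_gen (poly_ring S) B"
    using assms by (auto simp: kernel_binom_gen_def)
  let ?in_class = "(fact_step S d)\<^sup>*\<^sup>* \<alpha>"
  have "pushforward ?in_class x = 0" if "x \<in> pi_kernel S" for x :: "(('n \<Rightarrow> int) \<Rightarrow>\<^sub>0 nat) \<Rightarrow>\<^sub>0 'r"
  proof (rule pushforward_ideal_gen_eq_0)
    show "x \<in> ideal_gen (poly_ring S) B"
      using that kernel by simp
    fix b assume "b \<in> B"
    with B kernel obtain \<alpha>' \<gamma>' where "b = Poly_Mapping.single \<alpha>' 1 - Poly_Mapping.single \<gamma>' 1"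
      and "fact_step S d \<alpha>' \<gamma>'"
      by (rule kernel_generator_fact_step)
    with \<alpha> show "\<exists>\<alpha>' \<gamma>'. b = Poly_Mapping.single \<alpha>' 1 - Poly_Mapping.single \<gamma>' 1 \<and>
        (\<forall>\<beta>. ?in_class (\<beta> + \<alpha>') = ?in_class (\<beta> + \<gamma>'))"
      using fact_chain_add_step_iff by blast
  qed
  moreover have "Poly_Mapping.single \<alpha> (1::'r) - Poly_Mapping.single \<gamma> 1 \<in> pi_kernel S"
    using \<alpha> \<gamma> eq
    by (simp add: pi_kernel_def pi_R_eq_pushforward pushforward_diff poly_ring_diff poly_ring_single)
  ultimately have "pushforward ?in_class (Poly_Mapping.single \<alpha> (1::'r) - Poly_Mapping.single \<gamma> 1) = 0" .
  then have "Poly_Mapping.single (?in_class \<alpha>) (1::'r) = Poly_Mapping.single (?in_class \<gamma>) 1"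
    by (simp add: pushforward_diff)
  then show "?in_class \<gamma>"
    by (simp add: single_one_eq_iff)
qed

lemma kernel_binom_gen_iff_catenary_ok:
  "kernel_binom_gen TYPE('r::comm_ring_1) S d \<longleftrightarrow> catenary_ok S d"
  using kernel_binom_gen_imp_catenary_ok catenary_ok_imp_kernel_binom_gen by blast

subsection \<open>Finiteness of the catenary degree\<close>

lemma nat_seq_mono_subseq:
  fixes s :: "nat \<Rightarrow> nat"
  shows "\<exists>h :: nat \<Rightarrow> nat. strict_mono h \<and> mono (\<lambda>n. s (h n))"
proof -
  let ?tail_min = "\<lambda>x. \<forall>m \<ge> x. s x \<le> s m"
  have start: "\<exists>x. ?tail_min x"
    using ex_has_least_nat[of "\<lambda>_. True" 0 s] by auto
  have next_min: "\<exists>y. ?tail_min y \<and> x < y" for x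
  proof -
    obtain y where "y > x" "\<And>m. m > x \<Longrightarrow> s y \<le> s m"
      using ex_has_least_nat[of "\<lambda>m. m > x" "Suc x" s] by auto
    then show ?thesis
      by (metis order.strict_trans2)
  qed
  obtain h where h: "\<And>n. ?tail_min (h n) \<and> h n < h (Suc n)"
    using dependent_nat_choice[of "\<lambda>_. ?tail_min" "\<lambda>_ x y. x < y", OF start next_min] by metis
  then have "strict_mono h" "mono (\<lambda>n. s (h n))"
    by (auto simp: strict_mono_Suc_iff mono_iff_le_Suc less_imp_le)
  then show ?thesis
    by blast
qed

lemma dickson_mono_subseq:
  fixes f :: "nat \<Rightarrow> 'a \<Rightarrow> nat"
  assumes "finite A"
  shows "\<exists>h :: nat \<Rightarrow> nat. strict_mono h \<and> (\<forall>a \<in> A. mono (\<lambda>n. f (h n) a))"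
  using assms
proof (induction A rule: finite_induct)
  case empty
  have "strict_mono (\<lambda>n::nat. n)"
    by (simp add: strict_mono_def)
  then show ?case
    by blast
next
  case (insert a A)
  then obtain h :: "nat \<Rightarrow> nat" where h: "strict_mono h" and mono_A: "\<forall>b \<in> A. mono (\<lambda>n. f (h n) b)"
    by blast
  obtain k :: "nat \<Rightarrow> nat" where k: "strict_mono k" and mono_a: "mono (\<lambda>n. f (h (k n)) a)"
    using nat_seq_mono_subseq[of "\<lambda>n. f (h n) a"] by blast
  have "\<forall>b \<in> insert a A. mono (\<lambda>n. f (h (k n)) b)"
    using mono_A mono_a strict_mono_mono[OF k] by (simp add: mono_def)
  moreover have "strict_mono (\<lambda>n. h (k n))"
    using h k by (simp add: strict_mono_def)
  ultimately show ?case
    by blast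
qed

lemma dickson_good_pair:
  fixes f :: "nat \<Rightarrow> 'a \<Rightarrow> nat"
  assumes "finite A"
  shows "\<exists>i j. i < j \<and> (\<forall>a \<in> A. f i a \<le> f j a)"
proof -
  obtain h :: "nat \<Rightarrow> nat" where "strict_mono h" "\<forall>a \<in> A. mono (\<lambda>n. f (h n) a)"
    using dickson_mono_subseq[OF assms, of f] by blast
  then have "h 0 < h 1" "\<forall>a \<in> A. f (h 0) a \<le> f (h 1) a"
    by (simp add: strict_mono_def, metis monoD zero_le_one)
  then show ?thesis
    by blast
qed

definition nontrivial_relations :: "('n \<Rightarrow> int) set \<Rightarrow> ((('n \<Rightarrow> int) \<Rightarrow>\<^sub>0 nat) \<times> (('n \<Rightarrow> int) \<Rightarrow>\<^sub>0 nat)) set" where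
  "nontrivial_relations S = {(\<alpha>, \<gamma>). \<alpha> \<in> factorizations S \<and> \<gamma> \<in> factorizations S \<and>
     fact_eval \<alpha> = fact_eval \<gamma> \<and> \<alpha> \<noteq> \<gamma>}"

definition fle_pair :: "('v \<Rightarrow>\<^sub>0 nat) \<times> ('v \<Rightarrow>\<^sub>0 nat) \<Rightarrow> ('v \<Rightarrow>\<^sub>0 nat) \<times> ('v \<Rightarrow>\<^sub>0 nat) \<Rightarrow> bool" where
  "fle_pair p q \<longleftrightarrow> fle (fst p) (fst q) \<and> fle (snd p) (snd q)"

definition minimal_relations :: "('n \<Rightarrow> int) set \<Rightarrow> ((('n \<Rightarrow> int) \<Rightarrow>\<^sub>0 nat) \<times> (('n \<Rightarrow> int) \<Rightarrow>\<^sub>0 nat)) set" where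
  "minimal_relations S = {q \<in> nontrivial_relations S. \<forall>p \<in> nontrivial_relations S. fle_pair p q \<longrightarrow> p = q}"

lemma minimal_relation_below:
  fixes S :: "('n \<Rightarrow> int) set"
  assumes "q \<in> nontrivial_relations S"
  shows "\<exists>m \<in> minimal_relations S. fle_pair m q"
proof -
  define size where "size p = flen (fst p) + flen (snd p)"
    for p :: "(('n \<Rightarrow> int) \<Rightarrow>\<^sub>0 nat) \<times> (('n \<Rightarrow> int) \<Rightarrow>\<^sub>0 nat)"
  have "q \<in> nontrivial_relations S \<and> fle_pair q q"
    using assms by (simp add: fle_pair_def fle_def)
  then obtain m where m: "m \<in> nontrivial_relations S" "fle_pair m q"
    and least: "\<And>p. p \<in> nontrivial_relations S \<Longrightarrow> fle_pair p q \<Longrightarrow> size m \<le> size p"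
    using ex_has_least_nat[of "\<lambda>p. p \<in> nontrivial_relations S \<and> fle_pair p q" q size] by blast
  have "p = m" if "p \<in> nontrivial_relations S" "fle_pair p m" for p
  proof -
    have "fle_pair p q"
      using that(2) m(2) fle_trans by (auto simp: fle_pair_def)
    then have "size m \<le> size p"
      using least that(1) by blast
    moreover have fle: "fle (fst p) (fst m)" "fle (snd p) (snd m)"
      using that(2) by (simp_all add: fle_pair_def)
    ultimately have "flen (fst m) \<le> flen (fst p)" "flen (snd m) \<le> flen (snd p)"
      using flen_mono[OF fle(1)] flen_mono[OF fle(2)] by (simp_all add: size_def)
    then have "fst p = fst m" "snd p = snd m"
      using fle by (simp_all add: fle_flen_antisym)
    then show "p = m"
      by (simp add: prod_eq_iff)
  qed
  then have "m \<in> minimal_relations S"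
    using m(1) by (simp add: minimal_relations_def)
  with m(2) show ?thesis
    by blast
qed

lemma finite_minimal_relations:
  assumes "finite (atoms S)"
  shows "finite (minimal_relations S)"
proof (rule ccontr)
  assume "infinite (minimal_relations S)"
  then obtain e :: "nat \<Rightarrow> _" where inj: "inj e" and e: "range e \<subseteq> minimal_relations S"
    by (rule infinite_countable_subset[THEN exE]) blast
  \<comment> \<open>the pair \<open>e n\<close> read as one exponent vector indexed by \<open>atoms S <+> atoms S\<close>\<close>
  define f where "f n = case_sum (Poly_Mapping.lookup (fst (e n))) (Poly_Mapping.lookup (snd (e n)))" for n
  have "finite (atoms S <+> atoms S)"
    using assms by simp
  then obtain i j where "i < j" and ij: "\<And>x. x \<in> atoms S <+> atoms S \<Longrightarrow> f i x \<le> f j x"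
    using dickson_good_pair[of "atoms S <+> atoms S" f] by blast
  have ei: "e i \<in> nontrivial_relations S" and ej: "e j \<in> minimal_relations S"
    using e by (auto simp: minimal_relations_def)
  then have keys: "Poly_Mapping.keys (fst (e i)) \<subseteq> atoms S" "Poly_Mapping.keys (snd (e i)) \<subseteq> atoms S"
    by (cases "e i", simp add: nontrivial_relations_def factorizations_def)+
  have "fle (fst (e i)) (fst (e j))"
    using keys(1) by (rule fle_if_le_on_keys) (use ij[OF InlI] in \<open>simp add: f_def\<close>)
  moreover have "fle (snd (e i)) (snd (e j))"
    using keys(2) by (rule fle_if_le_on_keys) (use ij[OF InrI] in \<open>simp add: f_def\<close>)
  ultimately have "fle_pair (e i) (e j)"
    by (simp add: fle_pair_def)
  then have "e i = e j"
    using ei ej by (simp add: minimal_relations_def)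
  with inj \<open>i < j\<close> show False
    by (simp add: inj_eq)
qed

lemma nontrivial_relation_reduce:
  assumes "(\<alpha>, \<gamma>) \<in> nontrivial_relations S"
  obtains \<alpha>' \<gamma>' \<beta> \<delta> where "(\<alpha>', \<gamma>') \<in> minimal_relations S" "\<alpha> = \<alpha>' + \<beta>" "\<gamma> = \<gamma>' + \<delta>"
    "\<beta> \<in> factorizations S" "\<delta> \<in> factorizations S" "fact_eval \<beta> = fact_eval \<delta>"
    "flen \<beta> + flen \<delta> < flen \<alpha> + flen \<gamma>"
proof -
  obtain m where min: "m \<in> minimal_relations S" and "fle_pair m (\<alpha>, \<gamma>)"
    using minimal_relation_below[OF assms] by blast
  moreover obtain \<alpha>' \<gamma>' where m: "m = (\<alpha>', \<gamma>')"
    by (cases m)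
  ultimately have below: "fle \<alpha>' \<alpha>" "fle \<gamma>' \<gamma>"
    by (simp_all add: fle_pair_def)
  have rel: "fact_eval \<alpha>' = fact_eval \<gamma>'" "\<alpha>' \<noteq> \<gamma>'"
    using min by (simp_all add: m minimal_relations_def nontrivial_relations_def)
  define \<beta> \<delta> where "\<beta> = \<alpha> - \<alpha>'" and "\<delta> = \<gamma> - \<gamma>'"
  have \<alpha>: "\<alpha> = \<alpha>' + \<beta>" and \<gamma>: "\<gamma> = \<gamma>' + \<delta>"
    using below by (simp_all add: \<beta>_def \<delta>_def fle_add_diff)
  have "flen \<alpha>' + flen \<gamma>' \<noteq> 0"
    using rel(2) by (auto simp: flen_eq_0_iff)
  then have "flen \<beta> + flen \<delta> < flen \<alpha> + flen \<gamma>"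
    by (simp add: \<alpha> \<gamma> flen_add)
  moreover have "\<beta> \<in> factorizations S" "\<delta> \<in> factorizations S"
    using assms by (simp_all add: \<beta>_def \<delta>_def factorizations_diff nontrivial_relations_def)
  moreover have "fact_eval (\<alpha>' + \<beta>) = fact_eval (\<alpha>' + \<delta>)"
    using assms rel(1) by (simp add: \<alpha> \<gamma> fact_eval_add nontrivial_relations_def)
  then have "fact_eval \<beta> = fact_eval \<delta>"
    by (rule fact_eval_add_left_cancel)
  ultimately show thesis
    using that min \<alpha> \<gamma> m by blast
qed

lemma catenary_ok_minimal_relations:
  assumes "\<And>\<alpha> \<gamma>. (\<alpha>, \<gamma>) \<in> minimal_relations S \<Longrightarrow> max (flen \<alpha>) (flen \<gamma>) \<le> d"
  shows "catenary_ok S d"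
proof -
  have "(fact_step S d)\<^sup>*\<^sup>* \<alpha> \<gamma>"
    if "\<alpha> \<in> factorizations S" "\<gamma> \<in> factorizations S" "fact_eval \<alpha> = fact_eval \<gamma>" for \<alpha> \<gamma>
    using that
  proof (induction "flen \<alpha> + flen \<gamma>" arbitrary: \<alpha> \<gamma> rule: less_induct)
    case less
    show ?case
    proof (cases "\<alpha> = \<gamma>")
      case False
      with less.prems have "(\<alpha>, \<gamma>) \<in> nontrivial_relations S"
        by (simp add: nontrivial_relations_def)
      then obtain \<alpha>' \<gamma>' \<beta> \<delta> where min: "(\<alpha>', \<gamma>') \<in> minimal_relations S"
        and \<alpha>: "\<alpha> = \<alpha>' + \<beta>" and \<gamma>: "\<gamma> = \<gamma>' + \<delta>"
        and \<beta>: "\<beta> \<in> factorizations S" and \<delta>: "\<delta> \<in> factorizations S"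
        and eq: "fact_eval \<beta> = fact_eval \<delta>" and smaller: "flen \<beta> + flen \<delta> < flen \<alpha> + flen \<gamma>"
        by (rule nontrivial_relation_reduce)
      have rel: "\<alpha>' \<in> factorizations S" "\<gamma>' \<in> factorizations S" "fact_eval \<alpha>' = fact_eval \<gamma>'"
        using min by (simp_all add: minimal_relations_def nontrivial_relations_def)
      have "(fact_step S d)\<^sup>*\<^sup>* (\<gamma>' + \<beta>) \<gamma>"
        unfolding \<gamma> using less.hyps[OF smaller \<beta> \<delta> eq] rel(2) by (rule fact_chain_add_left)
      moreover have "fact_step S d \<alpha>' \<gamma>'"
        using rel order_trans[OF fdist_le_max assms[OF min]] by (simp add: fact_step_def)
      then have "fact_step S d (\<beta> + \<alpha>') (\<beta> + \<gamma>')"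
        using \<beta> by (rule fact_step_add_left)
      ultimately show ?thesis
        by (simp add: \<alpha> add.commute converse_rtranclp_into_rtranclp)
    qed simp
  qed
  then show ?thesis
    by (simp add: catenary_ok_iff_fact_chain)
qed

lemma catenary_ok_exists:
  assumes "finite (atoms S)"
  shows "\<exists>d. catenary_ok S d"
proof -
  let ?d = "Max ((\<lambda>(\<alpha>, \<gamma>). max (flen \<alpha>) (flen \<gamma>)) ` minimal_relations S)"
  have "max (flen \<alpha>) (flen \<gamma>) \<le> ?d" if "(\<alpha>, \<gamma>) \<in> minimal_relations S" for \<alpha> \<gamma>
    by (rule Max_ge[OF finite_imageI[OF finite_minimal_relations[OF assms]] image_eqI[OF _ that]]) simp
  then have "catenary_ok S ?d"
    by (rule catenary_ok_minimal_relations)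
  then show ?thesis ..
qed

lemma atoms_subset_generators:
  assumes "reduced_monoid (monoid_gen G)"
  shows "atoms (monoid_gen G) \<subseteq> G"
proof
  let ?S = "monoid_gen G"
  have zero_unit: "(\<lambda>_. 0) \<in> monoid_units ?S"
    by (auto simp: monoid_units_def intro: monoid_gen.zero)
  have units: "x \<in> monoid_units ?S \<Longrightarrow> x = (\<lambda>_. 0)" for x
    using assms by (simp add: reduced_monoid_def)
  fix x assume x: "x \<in> atoms ?S"
  then have "x \<in> ?S"
    by (simp add: atoms_def)
  then show "x \<in> G"
    using x
  proof (induction rule: monoid_gen.induct)
    case zero
    then show ?case
      using zero_unit by (simp add: atoms_def)
  next
    case (add g y)
    have "g \<in> ?S"
      using monoid_gen.add[OF add.hyps(1) monoid_gen.zero] by simp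
    then have "g \<in> monoid_units ?S \<or> y \<in> monoid_units ?S"
      using add.prems add.hyps(2) by (auto simp: atoms_def)
    then have "g = (\<lambda>_. 0) \<or> y = (\<lambda>_. 0)"
      using units by blast
    then show ?case
      using add by auto
  qed
qed

lemma finite_atoms:
  assumes "affine_monoid S" and "reduced_monoid S"
  shows "finite (atoms S)"
  using assms atoms_subset_generators finite_subset by (fastforce simp: affine_monoid_def)

theorem corollary2p6:
  fixes S :: "('n::finite \<Rightarrow> int) set"
  assumes "affine_monoid S" and "reduced_monoid S"
  shows "kernel_binom_gen TYPE('r::comm_ring_1) S (catenary_degree S)
       \<and> (\<forall>d. kernel_binom_gen TYPE('r) S d \<longrightarrow> catenary_degree S \<le> d)
       \<and> (\<forall>d. kernel_binom_gen TYPE('r) S d \<longleftrightarrow> kernel_binom_gen TYPE('q::comm_ring_1) S d)"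
proof -
  obtain d where "catenary_ok S d"
    using catenary_ok_exists[OF finite_atoms[OF assms]] ..
  then have "catenary_ok S (catenary_degree S)"
    unfolding catenary_degree_def by (rule LeastI)
  then show ?thesis
    by (simp add: kernel_binom_gen_iff_catenary_ok catenary_degree_def Least_le)
qed

end
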